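(* Let $b,\beta_1,\beta_2,\gamma,\alpha,\lambda,\varepsilon_1,\varepsilon_2$ be positive real numbers, $\beta=\beta_1+\beta_2$, and consider the system $$s'=b-(b+\beta)s+\gamma r+(\varepsilon_1-\lambda)is+\varepsilon_2 rs,$$ $$i'=\beta_1 s-(b+\varepsilon_1+\alpha)i+\lambda is+\varepsilon_1 i^2+\varepsilon_2 ir,$$ $$r'=\beta_2 s-(b+\varepsilon_2+\gamma)r+\alpha i+\varepsilon_1 ir+\varepsilon_2 r^2.$$ Let $D=\{(s,i,r): s+i+r=1,\ s\ge0,\ i\ge0,\ r\ge0\}$ with relative interior $\overset{o}{D}$. Then this system has no source in $\overset{o}{D}$.
   Context: The plane $s+i+r=1$ is invariant for this system, so on it the dynamics is two-dimensional (equivalently given by substituting $r=1-s-i$). A source is a rest point at which all eigenvalues of the linearization of this (restricted, two-dimensional) system have positive real parts. *)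

theory Defs
  imports "HOL-Analysis.Analysis"
begin

definition sdot :: "real \<Rightarrow> real \<Rightarrow> real \<Rightarrow> real \<Rightarrow> real \<Rightarrow> real \<Rightarrow> real \<Rightarrow> real \<Rightarrow> real \<Rightarrow> real \<Rightarrow> real \<Rightarrow> real" where
  "sdot b \<beta>1 \<beta>2 \<gamma> \<alpha> lam \<epsilon>1 \<epsilon>2 s i r =
     b - (b + (\<beta>1 + \<beta>2)) * s + \<gamma> * r + (\<epsilon>1 - lam) * i * s + \<epsilon>2 * r * s"

definition idot :: "real \<Rightarrow> real \<Rightarrow> real \<Rightarrow> real \<Rightarrow> real \<Rightarrow> real \<Rightarrow> real \<Rightarrow> real \<Rightarrow> real \<Rightarrow> real \<Rightarrow> real \<Rightarrow> real" where
  "idot b \<beta>1 \<beta>2 \<gamma> \<alpha> lam \<epsilon>1 \<epsilon>2 s i r =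
     \<beta>1 * s - (b + \<epsilon>1 + \<alpha>) * i + lam * i * s + \<epsilon>1 * i^2 + \<epsilon>2 * i * r"

definition rdot :: "real \<Rightarrow> real \<Rightarrow> real \<Rightarrow> real \<Rightarrow> real \<Rightarrow> real \<Rightarrow> real \<Rightarrow> real \<Rightarrow> real \<Rightarrow> real \<Rightarrow> real \<Rightarrow> real" where
  "rdot b \<beta>1 \<beta>2 \<gamma> \<alpha> lam \<epsilon>1 \<epsilon>2 s i r =
     \<beta>2 * s - (b + \<epsilon>2 + \<gamma>) * r + \<alpha> * i + \<epsilon>1 * i * r + \<epsilon>2 * r^2"

definition restricted_field ::
  "real \<Rightarrow> real \<Rightarrow> real \<Rightarrow> real \<Rightarrow> real \<Rightarrow> real \<Rightarrow> real \<Rightarrow> real \<Rightarrow> real \<times> real \<Rightarrow> real \<times> real" where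
  "restricted_field b \<beta>1 \<beta>2 \<gamma> \<alpha> lam \<epsilon>1 \<epsilon>2 = (\<lambda>(s, i).
     (sdot b \<beta>1 \<beta>2 \<gamma> \<alpha> lam \<epsilon>1 \<epsilon>2 s i (1 - s - i),
      idot b \<beta>1 \<beta>2 \<gamma> \<alpha> lam \<epsilon>1 \<epsilon>2 s i (1 - s - i)))"

definition eigenvalues_lin2 :: "(real \<times> real \<Rightarrow> real \<times> real) \<Rightarrow> complex set" where
  "eigenvalues_lin2 L =
     (let a = fst (L (1, 0)); c = snd (L (1, 0));
          bb = fst (L (0, 1)); d = snd (L (0, 1))
      in {z. (z - complex_of_real a) * (z - complex_of_real d)
               - complex_of_real bb * complex_of_real c = 0})"

definition is_source :: "(real \<times> real \<Rightarrow> real \<times> real) \<Rightarrow> real \<times> real \<Rightarrow> bool" where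
  "is_source F p \<longleftrightarrow> F p = (0, 0) \<and>
     (\<exists>L. (F has_derivative L) (at p) \<and> (\<forall>z \<in> eigenvalues_lin2 L. Re z > 0))"

end

theory Submission
  imports Defs
begin

text \<open>At a rest point the trace of the Jacobian is the sum of the two eigenvalues, so at a
  source it is positive. But \<open>1/(s i r)\<close> is a Dulac function on the open simplex: the
  divergence of \<open>F/(s i r)\<close> is negative there, and at a rest point of \<open>F\<close> this divergence
  is the trace of the Jacobian divided by \<open>s i r\<close>.\<close>

lemma char_poly_2x2_root:
  fixes a bb c d :: real and q z :: complex
  assumes "q\<^sup>2 = complex_of_real ((a - d)\<^sup>2 + 4 * bb * c)"
    and "z = (complex_of_real (a + d) + q) / 2 \<or> z = (complex_of_real (a + d) - q) / 2"
  shows "(z - complex_of_real a) * (z - complex_of_real d)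
           - complex_of_real bb * complex_of_real c = 0"
  using assms by (elim disjE) (simp add: field_simps power2_eq_square, algebra)+

lemma eigenvalues_lin2_Re_pos_imp_trace_pos:
  assumes "\<forall>z \<in> eigenvalues_lin2 L. Re z > 0"
  shows "fst (L (1, 0)) + snd (L (0, 1)) > 0"
proof -
  define q where "q = csqrt (complex_of_real
    ((fst (L (1, 0)) - snd (L (0, 1)))\<^sup>2 + 4 * fst (L (0, 1)) * snd (L (1, 0))))"
  let ?t = "complex_of_real (fst (L (1, 0)) + snd (L (0, 1)))"
  have "q\<^sup>2 = complex_of_real
    ((fst (L (1, 0)) - snd (L (0, 1)))\<^sup>2 + 4 * fst (L (0, 1)) * snd (L (1, 0)))"
    unfolding q_def by (rule power2_csqrt)
  then have "(?t + q) / 2 \<in> eigenvalues_lin2 L" "(?t - q) / 2 \<in> eigenvalues_lin2 L"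
    unfolding eigenvalues_lin2_def Let_def mem_Collect_eq
    by (simp_all add: char_poly_2x2_root)
  then have "Re ((?t + q) / 2) > 0" "Re ((?t - q) / 2) > 0"
    using assms by blast+
  then show ?thesis by simp
qed

definition restricted_divergence ::
  "real \<Rightarrow> real \<Rightarrow> real \<Rightarrow> real \<Rightarrow> real \<Rightarrow> real \<Rightarrow> real \<Rightarrow> real \<Rightarrow> real \<Rightarrow> real \<Rightarrow> real" where
  "restricted_divergence b \<beta>1 \<beta>2 \<gamma> \<alpha> lam \<epsilon>1 \<epsilon>2 s i =
     (let r = 1 - s - i in
      (- (b + \<beta>1 + \<beta>2) - \<gamma> + (\<epsilon>1 - lam) * i + \<epsilon>2 * (r - s))
      + (- (b + \<epsilon>1 + \<alpha>) + lam * s + 2 * \<epsilon>1 * i + \<epsilon>2 * (r - i)))"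

lemma restricted_field_has_derivative:
  "(restricted_field b \<beta>1 \<beta>2 \<gamma> \<alpha> lam \<epsilon>1 \<epsilon>2 has_derivative
    (\<lambda>(x, y).
      ((- (b + \<beta>1 + \<beta>2) - \<gamma> + (\<epsilon>1 - lam) * i + \<epsilon>2 * ((1 - s - i) - s)) * x
         + (- \<gamma> + (\<epsilon>1 - lam) * s - \<epsilon>2 * s) * y,
       (\<beta>1 + lam * i - \<epsilon>2 * i) * x
         + (- (b + \<epsilon>1 + \<alpha>) + lam * s + 2 * \<epsilon>1 * i + \<epsilon>2 * ((1 - s - i) - i)) * y)))
   (at (s, i))"
proof -
  have "restricted_field b \<beta>1 \<beta>2 \<gamma> \<alpha> lam \<epsilon>1 \<epsilon>2 = (\<lambda>p.
     (sdot b \<beta>1 \<beta>2 \<gamma> \<alpha> lam \<epsilon>1 \<epsilon>2 (fst p) (snd p) (1 - fst p - snd p),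
      idot b \<beta>1 \<beta>2 \<gamma> \<alpha> lam \<epsilon>1 \<epsilon>2 (fst p) (snd p) (1 - fst p - snd p)))"
    unfolding restricted_field_def by (auto simp: fun_eq_iff)
  then show ?thesis
    unfolding sdot_def idot_def
    apply (elim ssubst)
    apply (rule has_derivative_eq_rhs)
     apply (rule derivative_eq_intros | simp)+
    apply (auto simp: fun_eq_iff algebra_simps power2_eq_square)
    done
qed

lemma restricted_field_derivative_trace:
  assumes "(restricted_field b \<beta>1 \<beta>2 \<gamma> \<alpha> lam \<epsilon>1 \<epsilon>2 has_derivative L) (at (s, i))"
  shows "fst (L (1, 0)) + snd (L (0, 1)) = restricted_divergence b \<beta>1 \<beta>2 \<gamma> \<alpha> lam \<epsilon>1 \<epsilon>2 s i"
  using has_derivative_unique[OF assms restricted_field_has_derivative]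
  by (simp add: restricted_divergence_def Let_def)

text \<open>The left-hand side is \<open>s i r\<close> times the divergence of \<open>F/(s i r)\<close>, where \<open>F = (f, g)\<close>
  is the restricted field and \<open>r = 1 - s - i\<close>.\<close>

lemma restricted_divergence_Dulac_identity:
  fixes b \<beta>1 \<beta>2 \<gamma> \<alpha> lam \<epsilon>1 \<epsilon>2 s i r :: real
  assumes "r = 1 - s - i"
  defines "f \<equiv> sdot b \<beta>1 \<beta>2 \<gamma> \<alpha> lam \<epsilon>1 \<epsilon>2 s i r"
    and "g \<equiv> idot b \<beta>1 \<beta>2 \<gamma> \<alpha> lam \<epsilon>1 \<epsilon>2 s i r"
  shows "restricted_divergence b \<beta>1 \<beta>2 \<gamma> \<alpha> lam \<epsilon>1 \<epsilon>2 s i * (s * i * r)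
           - f * i * r - g * s * r + (f + g) * s * i
         = - (b * (1 - s) * i * r + \<gamma> * r\<^sup>2 * i + \<beta>1 * s\<^sup>2 * r + \<beta>2 * s\<^sup>2 * i + \<alpha> * i\<^sup>2 * s)"
  unfolding f_def g_def assms(1) restricted_divergence_def Let_def sdot_def idot_def
  by (simp add: algebra_simps power2_eq_square)

lemma restricted_divergence_neg_at_interior_rest_point:
  fixes b \<beta>1 \<beta>2 \<gamma> \<alpha> lam \<epsilon>1 \<epsilon>2 :: real
  assumes "b > 0" "\<beta>1 > 0" "\<beta>2 > 0" "\<gamma> > 0" "\<alpha> > 0"
    and "s > 0" "i > 0" "1 - s - i > 0"
    and "restricted_field b \<beta>1 \<beta>2 \<gamma> \<alpha> lam \<epsilon>1 \<epsilon>2 (s, i) = (0, 0)"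
  shows "restricted_divergence b \<beta>1 \<beta>2 \<gamma> \<alpha> lam \<epsilon>1 \<epsilon>2 s i < 0"
proof -
  define r where "r = 1 - s - i"
  have r: "r > 0" and s1: "1 - s > 0"
    using assms(6-8) by (simp_all add: r_def)
  have "sdot b \<beta>1 \<beta>2 \<gamma> \<alpha> lam \<epsilon>1 \<epsilon>2 s i r = 0" "idot b \<beta>1 \<beta>2 \<gamma> \<alpha> lam \<epsilon>1 \<epsilon>2 s i r = 0"
    using assms(9) by (simp_all add: restricted_field_def r_def)
  then have "restricted_divergence b \<beta>1 \<beta>2 \<gamma> \<alpha> lam \<epsilon>1 \<epsilon>2 s i * (s * i * r)
      = - (b * (1 - s) * i * r + \<gamma> * r\<^sup>2 * i + \<beta>1 * s\<^sup>2 * r + \<beta>2 * s\<^sup>2 * i + \<alpha> * i\<^sup>2 * s)"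
    using restricted_divergence_Dulac_identity[OF r_def, of b \<beta>1 \<beta>2 \<gamma> \<alpha> lam \<epsilon>1 \<epsilon>2] by simp
  also have "\<dots> < 0"
  proof -
    have "b * (1 - s) * i * r > 0" "\<gamma> * r\<^sup>2 * i > 0" "\<beta>1 * s\<^sup>2 * r > 0"
      "\<beta>2 * s\<^sup>2 * i > 0" "\<alpha> * i\<^sup>2 * s > 0"
      using assms(1-7) r s1 by simp_all
    then show ?thesis by linarith
  qed
  finally show ?thesis
    using assms(6,7) r by (simp add: mult_less_0_iff)
qed

theorem corollary2p4:
  fixes b \<beta>1 \<beta>2 \<gamma> \<alpha> lam \<epsilon>1 \<epsilon>2 :: real
  assumes "b > 0" "\<beta>1 > 0" "\<beta>2 > 0" "\<gamma> > 0" "\<alpha> > 0" "lam > 0" "\<epsilon>1 > 0" "\<epsilon>2 > 0"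
  shows "\<not> (\<exists>s i. s > 0 \<and> i > 0 \<and> 1 - s - i > 0 \<and>
            is_source (restricted_field b \<beta>1 \<beta>2 \<gamma> \<alpha> lam \<epsilon>1 \<epsilon>2) (s, i))"
proof
  assume "\<exists>s i. s > 0 \<and> i > 0 \<and> 1 - s - i > 0 \<and>
            is_source (restricted_field b \<beta>1 \<beta>2 \<gamma> \<alpha> lam \<epsilon>1 \<epsilon>2) (s, i)"
  then obtain s i L where interior: "s > 0" "i > 0" "1 - s - i > 0"
    and rest: "restricted_field b \<beta>1 \<beta>2 \<gamma> \<alpha> lam \<epsilon>1 \<epsilon>2 (s, i) = (0, 0)"
    and deriv: "(restricted_field b \<beta>1 \<beta>2 \<gamma> \<alpha> lam \<epsilon>1 \<epsilon>2 has_derivative L) (at (s, i))"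
    and eigen: "\<forall>z \<in> eigenvalues_lin2 L. Re z > 0"
    unfolding is_source_def by blast
  have "restricted_divergence b \<beta>1 \<beta>2 \<gamma> \<alpha> lam \<epsilon>1 \<epsilon>2 s i > 0"
    using eigenvalues_lin2_Re_pos_imp_trace_pos[OF eigen]
    unfolding restricted_field_derivative_trace[OF deriv] .
  moreover have "restricted_divergence b \<beta>1 \<beta>2 \<gamma> \<alpha> lam \<epsilon>1 \<epsilon>2 s i < 0"
    using restricted_divergence_neg_at_interior_rest_point[OF assms(1-5) interior rest] .
  ultimately show False by simp
qed

end
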